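(* A number $t\in \frac{n+m}{2}+\mathbb Z$ is critical (i.e. $t\in\mathrm{Crit}$) if and only if $$|t-\kappa|<L+\tfrac12 \qquad (I)$$ and, in addition, in the exceptional case ($n\equiv m\equiv 1 \bmod 2$) $t$ satisfies the parity condition $$t-\kappa'\in (2\mathbb N-\epsilon)\cup -(2\mathbb N-1-\epsilon),$$ where $\epsilon\in\{0,1\}$, $\epsilon\equiv\delta+\delta' \bmod 2$, and $\mathbb N=\{1,2,3,\dots\}$.
   Context: Let $n,m\ge 1$ be integers, not both equal to $1$. For $N\ge1$ put $L_0^+(N):=\{(w,l)\in\mathbb Z\times\mathbb Z^N:\ l_1>l_2>\dots>l_N,\ l_i+l_{N+1-i}=0 \text{ for all } i,\ w+l_i\equiv N+1 \bmod 2 \text{ for all } i\}$. Fix $(w,l)\in L_0^+(n)$, $(w',l')\in L_0^+(m)$ and $\delta,\delta'\in\{0,1\}$ (the Langlands parameters of archimedean components $\pi_\infty\cong J(-w,l)\otimes \mathrm{sgn}^\delta$, $\sigma_\infty\cong J(-w',l')\otimes\mathrm{sgn}^{\delta'}$ of cohomological cuspidal representations of $GL_n$, $GL_m$ over $\mathbb Q$). Representations of the Weil group $W_{\mathbb R}$ (Knapp's notation): for an integer $l\ge1$ and $t\in\mathbb C$, $(l,t)$ is the irreducible 2-dimensional representation, and for $\epsilon\in\{0,1\}$, $(\mathrm{sgn}^\epsilon,t)$ is the 1-dimensional one; $(0,t):=(\mathrm{sgn}^0,t)\oplus(\mathrm{sgn}^1,t)$. Their $L$-factors are $L(s,(l,t))=\Gamma_{\mathbb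 C}(s+t+\frac l2)$, $L(s,(\mathrm{sgn}^\epsilon,t))=\Gamma_{\mathbb R}(s+t+\epsilon)$, multiplicative in direct sums, where $\Gamma_{\mathbb R}(s)=\pi^{-s/2}\Gamma(s/2)$, $\Gamma_{\mathbb C}(s)=2(2\pi)^{-s}\Gamma(s)$. The contragredient of $(l,t)$ is $(l,-t)$ and that of $(\mathrm{sgn}^\epsilon,t)$ is $(\mathrm{sgn}^\epsilon,-t)$. Put $\pi^W:=\bigoplus_{i=1}^{\lfloor n/2\rfloor}(l_i,-w/2)$, plus the summand $(\mathrm{sgn}^\delta,-w/2)$ if $n$ is odd; define $\sigma^W$ analogously from $(w',l',\delta',m)$; and $\tau:=\pi^W\otimes\sigma^W$. A number $t\in\frac{n+m}{2}+\mathbb Z$ is called critical if neither $s\mapsto L(s,\tau)$ nor $s\mapsto L(1-s,\check\tau)$ has a pole at $s=t$; $\mathrm{Crit}$ denotes the set of critical numbers. Put $\kappa:=\frac12(w+w'+1)$, $\kappa':=\kappa-\frac12$. The exceptional case is $n\equiv m\equiv1\bmod 2$. Let $L_0:=\min\{|l_i-l'_j|:1\le i\le n,1\le j\le m,\ i\ne\frac{n+1}{2}\text{ or } j\ne \frac{m+1}{2}\}$ and $L:=L_0/2$. *)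

theory Defs
  imports "HOL-Analysis.Analysis"
begin

definition has_pole_at :: "(complex \<Rightarrow> complex) \<Rightarrow> complex \<Rightarrow> bool" where
  "has_pole_at f a \<longleftrightarrow> filterlim f at_infinity (at a)"

definition GammaR :: "complex \<Rightarrow> complex" where
  "GammaR s = (of_real pi) powr (- s / 2) * Gamma (s / 2)"

definition GammaC :: "complex \<Rightarrow> complex" where
  "GammaC s = 2 * (2 * of_real pi) powr (- s) * Gamma s"

text \<open>Irreducible representations of the Weil group W_R (Knapp):
  WTwo l t = (l,t) (2-dimensional, l \<ge> 1), WOne e t = (sgn^e, t).
  A representation is a list (direct sum) of irreducibles.\<close>
datatype wrep = WTwo int complex | WOne nat complex

fun Lfac :: "wrep \<Rightarrow> complex \<Rightarrow> complex" where
  "Lfac (WTwo l t) s = GammaC (s + t + of_int l / 2)"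
| "Lfac (WOne e t) s = GammaR (s + t + of_nat e)"

definition Lfun :: "complex \<Rightarrow> wrep list \<Rightarrow> complex" where
  "Lfun s rs = prod_list (map (\<lambda>r. Lfac r s) rs)"

fun wcontra :: "wrep \<Rightarrow> wrep" where
  "wcontra (WTwo l t) = WTwo l (- t)"
| "wcontra (WOne e t) = WOne e (- t)"

definition contra :: "wrep list \<Rightarrow> wrep list" where
  "contra rs = map wcontra rs"

text \<open>(l,t) for l \<ge> 0, with the convention (0,t) = (sgn^0,t) + (sgn^1,t).\<close>
definition wtwo :: "int \<Rightarrow> complex \<Rightarrow> wrep list" where
  "wtwo l t = (if l = 0 then [WOne 0 t, WOne 1 t] else [WTwo l t])"

text \<open>Tensor products of irreducibles (Knapp's formulas).\<close>
fun wtens :: "wrep \<Rightarrow> wrep \<Rightarrow> wrep list" where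
  "wtens (WTwo l t) (WTwo l' t') = WTwo (l + l') (t + t') # wtwo \<bar>l - l'\<bar> (t + t')"
| "wtens (WTwo l t) (WOne e t') = [WTwo l (t + t')]"
| "wtens (WOne e t) (WTwo l t') = [WTwo l (t + t')]"
| "wtens (WOne e t) (WOne e' t') = [WOne ((e + e') mod 2) (t + t')]"

definition tens :: "wrep list \<Rightarrow> wrep list \<Rightarrow> wrep list" where
  "tens xs ys = concat (map (\<lambda>x. concat (map (\<lambda>y. wtens x y) ys)) xs)"

text \<open>(w,l) \<in> L_0^+(N); l is indexed by 1..N.\<close>
definition L0plus :: "nat \<Rightarrow> int \<Rightarrow> (nat \<Rightarrow> int) \<Rightarrow> bool" where
  "L0plus N w l \<longleftrightarrow>
     (\<forall>i j. 1 \<le> i \<longrightarrow> i < j \<longrightarrow> j \<le> N \<longrightarrow> l j < l i) \<and>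
     (\<forall>i. 1 \<le> i \<longrightarrow> i \<le> N \<longrightarrow> l i + l (N + 1 - i) = 0) \<and>
     (\<forall>i. 1 \<le> i \<longrightarrow> i \<le> N \<longrightarrow> (w + l i) mod 2 = (int N + 1) mod 2)"

definition piW :: "nat \<Rightarrow> int \<Rightarrow> (nat \<Rightarrow> int) \<Rightarrow> nat \<Rightarrow> wrep list" where
  "piW N w l d = map (\<lambda>i. WTwo (l i) (- of_int w / 2)) [1..<N div 2 + 1]
     @ (if odd N then [WOne d (- of_int w / 2)] else [])"

definition tauW :: "nat \<Rightarrow> int \<Rightarrow> (nat \<Rightarrow> int) \<Rightarrow> nat \<Rightarrow> nat \<Rightarrow> int \<Rightarrow> (nat \<Rightarrow> int) \<Rightarrow> nat \<Rightarrow> wrep list" where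
  "tauW n w l d m w' l' d' = tens (piW n w l d) (piW m w' l' d')"

definition critical :: "nat \<Rightarrow> int \<Rightarrow> (nat \<Rightarrow> int) \<Rightarrow> nat \<Rightarrow> nat \<Rightarrow> int \<Rightarrow> (nat \<Rightarrow> int) \<Rightarrow> nat \<Rightarrow> real \<Rightarrow> bool" where
  "critical n w l d m w' l' d' t \<longleftrightarrow>
     (\<exists>k::int. t = (real n + real m) / 2 + of_int k) \<and>
     \<not> has_pole_at (\<lambda>s. Lfun s (tauW n w l d m w' l' d')) (complex_of_real t) \<and>
     \<not> has_pole_at (\<lambda>s. Lfun (1 - s) (contra (tauW n w l d m w' l' d'))) (complex_of_real t)"

definition Lnought :: "nat \<Rightarrow> (nat \<Rightarrow> int) \<Rightarrow> nat \<Rightarrow> (nat \<Rightarrow> int) \<Rightarrow> int" where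
  "Lnought n l m l' = Min {\<bar>l i - l' j\<bar> | i j. 1 \<le> i \<and> i \<le> n \<and> 1 \<le> j \<and> j \<le> m \<and>
       (real i \<noteq> (real n + 1) / 2 \<or> real j \<noteq> (real m + 1) / 2)}"

end

theory Submission
  imports Defs
begin

text \<open>\<open>L(s, \<tau>)\<close> is a product of \<open>\<Gamma>\<^sub>\<real>\<close>- and \<open>\<Gamma>\<^sub>\<complex>\<close>-factors, one for each irreducible
  constituent of \<open>\<tau>\<close>, and at every point each factor has either a pole or a nonzero limit;
  hence the product has a pole exactly where one of the factors has one. By Knapp's tensor
  product rules the constituents of \<open>\<tau>\<close> are the \<open>(L, -(w + w')/2)\<close> with \<open>L\<close> running through
  the gaps \<open>|l\<^sub>i - l'\<^sub>j|\<close> (a gap \<open>0\<close> meaning \<open>sgn\<^sup>0 \<oplus> sgn\<^sup>1\<close>), plus \<open>(sgn\<^sup>\<epsilon>, -(w + w')/2)\<close> in the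
  exceptional case. The parity condition of \<open>L\<^sub>0\<^sup>+\<close> makes \<open>t - \<kappa>' + L/2\<close> an integer, and then
  \<open>\<Gamma>\<^sub>\<complex>(s - \<kappa>' + L/2)\<close> and \<open>\<Gamma>\<^sub>\<complex>(1 - s + \<kappa>' + L/2)\<close> are both regular at \<open>t\<close> iff
  \<open>|t - \<kappa>| < L/2 + 1/2\<close>; the smallest gap is the binding one. The one-dimensional constituent
  gives the parity condition.\<close>

section \<open>Poles of products of Gamma factors\<close>

definition nonzero_limit_at :: "(complex \<Rightarrow> complex) \<Rightarrow> complex \<Rightarrow> bool" where
  "nonzero_limit_at f z \<longleftrightarrow> (\<exists>c. c \<noteq> 0 \<and> (f \<longlongrightarrow> c) (at z))"

lemma nonzero_limit_at_imp_not_pole: "nonzero_limit_at f z \<Longrightarrow> \<not> has_pole_at f z"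
  unfolding nonzero_limit_at_def has_pole_at_def
  using not_tendsto_and_filterlim_at_infinity[of "at z" f] by auto

lemma has_pole_at_Gamma: "z \<in> \<int>\<^sub>\<le>\<^sub>0 \<Longrightarrow> has_pole_at Gamma z"
  unfolding has_pole_at_def by (auto elim!: nonpos_Ints_cases' intro: Gamma_poles)

lemma pole_or_nonzero_limit_times:
  assumes f: "has_pole_at f z \<or> nonzero_limit_at f z"
    and g: "has_pole_at g z \<or> nonzero_limit_at g z"
  shows "(has_pole_at (\<lambda>s. f s * g s) z \<longleftrightarrow> has_pole_at f z \<or> has_pole_at g z) \<and>
         (has_pole_at (\<lambda>s. f s * g s) z \<or> nonzero_limit_at (\<lambda>s. f s * g s) z)"
proof (cases "nonzero_limit_at f z \<and> nonzero_limit_at g z")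
  case True
  then obtain c d where "c \<noteq> 0" "(f \<longlongrightarrow> c) (at z)" "d \<noteq> 0" "(g \<longlongrightarrow> d) (at z)"
    unfolding nonzero_limit_at_def by blast
  then have "nonzero_limit_at (\<lambda>s. f s * g s) z"
    unfolding nonzero_limit_at_def by (intro exI[of _ "c * d"]) (auto intro: tendsto_mult)
  then show ?thesis using True nonzero_limit_at_imp_not_pole by blast
next
  case False
  then have "has_pole_at f z \<or> has_pole_at g z" using f g by blast
  moreover have "filterlim (\<lambda>s. f s * g s) at_infinity (at z)"
    using f g False unfolding has_pole_at_def nonzero_limit_at_def
  proof (elim disjE exE conjE)
    fix c assume "(g \<longlongrightarrow> c) (at z)" "c \<noteq> 0" "filterlim f at_infinity (at z)"
    from tendsto_mult_filterlim_at_infinity[OF this] show ?thesis by (simp add: mult.commute)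
  qed (auto intro: filterlim_at_infinity_times tendsto_mult_filterlim_at_infinity)
  ultimately show ?thesis unfolding has_pole_at_def by blast
qed

lemma pole_or_nonzero_limit_prod_list:
  assumes "\<And>x. x \<in> set xs \<Longrightarrow> has_pole_at (F x) z \<or> nonzero_limit_at (F x) z"
  shows "(has_pole_at (\<lambda>s. \<Prod>x\<leftarrow>xs. F x s) z \<longleftrightarrow> (\<exists>x\<in>set xs. has_pole_at (F x) z)) \<and>
         (has_pole_at (\<lambda>s. \<Prod>x\<leftarrow>xs. F x s) z \<or> nonzero_limit_at (\<lambda>s. \<Prod>x\<leftarrow>xs. F x s) z)"
  using assms
proof (induction xs)
  case Nil
  have "nonzero_limit_at (\<lambda>s. 1) z" unfolding nonzero_limit_at_def by (auto intro: exI[of _ 1])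
  then show ?case using nonzero_limit_at_imp_not_pole by auto
next
  case (Cons x xs)
  then show ?case using pole_or_nonzero_limit_times[of "F x" z "\<lambda>s. \<Prod>x\<leftarrow>xs. F x s"] by auto
qed

lemma pole_or_nonzero_limit_times_Gamma_affine:
  fixes a b z :: complex
  assumes a: "a \<noteq> 0" and K: "isCont K z" "K z \<noteq> 0"
  defines "f \<equiv> \<lambda>s. K s * Gamma (a * s + b)"
  shows "(has_pole_at f z \<longleftrightarrow> a * z + b \<in> \<int>\<^sub>\<le>\<^sub>0) \<and> (has_pole_at f z \<or> nonzero_limit_at f z)"
proof (cases "a * z + b \<in> \<int>\<^sub>\<le>\<^sub>0")
  case True
  have "filterlim (\<lambda>s. a * s + b) (at (a * z + b)) (at z)"
    unfolding filterlim_at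
  proof
    show "((\<lambda>s. a * s + b) \<longlongrightarrow> a * z + b) (at z)" by (intro tendsto_intros)
    show "\<forall>\<^sub>F s in at z. a * s + b \<in> UNIV \<and> a * s + b \<noteq> a * z + b"
      unfolding eventually_at_filter using a by simp
  qed
  with has_pole_at_Gamma[OF True] have "filterlim (\<lambda>s. Gamma (a * s + b)) at_infinity (at z)"
    unfolding has_pole_at_def by (rule filterlim_compose)
  with tendsto_mult_filterlim_at_infinity K have "has_pole_at f z"
    unfolding has_pole_at_def f_def isCont_def by blast
  then show ?thesis using True by blast
next
  case False
  then have "isCont f z" "f z \<noteq> 0"
    unfolding f_def using K by (auto intro!: continuous_intros simp: Gamma_nonzero)
  then have "nonzero_limit_at f z" unfolding nonzero_limit_at_def isCont_def by blast
  then show ?thesis using False nonzero_limit_at_imp_not_pole by blast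
qed

lemma GammaC_eq: "GammaC s = 2 * exp (- s * ln (2 * of_real pi)) * Gamma s"
  unfolding GammaC_def powr_def by simp

lemma GammaR_eq: "GammaR s = exp (- s / 2 * ln (of_real pi)) * Gamma (s / 2)"
  unfolding GammaR_def powr_def by simp

text \<open>Up to a factor that is entire and zero-free, \<open>Lfac r s\<close> is \<open>Gamma (Lfac_arg r s)\<close>.\<close>

fun Lfac_arg :: "wrep \<Rightarrow> complex \<Rightarrow> complex" where
  "Lfac_arg (WTwo l t) s = s + t + of_int l / 2"
| "Lfac_arg (WOne e t) s = (s + t + of_nat e) / 2"

lemma pole_or_nonzero_limit_Lfac_affine:
  fixes a b z :: complex and r :: wrep
  assumes a: "a \<noteq> 0"
  defines "f \<equiv> \<lambda>s. Lfac r (a * s + b)"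
  shows "(has_pole_at f z \<longleftrightarrow> Lfac_arg r (a * z + b) \<in> \<int>\<^sub>\<le>\<^sub>0) \<and>
         (has_pole_at f z \<or> nonzero_limit_at f z)"
proof (cases r)
  case (WTwo l t)
  define b' where "b' = b + t + of_int l / 2"
  define K where "K s = 2 * exp (- (a * s + b') * ln (2 * of_real pi))" for s
  have f: "f = (\<lambda>s. K s * Gamma (a * s + b'))"
    unfolding f_def K_def b'_def WTwo by (simp add: GammaC_eq add.assoc)
  have arg: "Lfac_arg r (a * z + b) = a * z + b'" unfolding b'_def WTwo by (simp add: add.assoc)
  have K: "isCont K z" "K z \<noteq> 0" unfolding K_def by (auto intro!: continuous_intros)
  show ?thesis unfolding f arg by (rule pole_or_nonzero_limit_times_Gamma_affine[OF a K])
next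
  case (WOne e t)
  define b' where "b' = (b + t + of_nat e) / 2"
  define K where "K s = exp (- (a * s + 2 * b') / 2 * ln (of_real pi))" for s
  have f: "f = (\<lambda>s. K s * Gamma (a / 2 * s + b'))"
    unfolding f_def K_def b'_def WOne by (simp add: GammaR_eq add_divide_distrib add.assoc)
  have arg: "Lfac_arg r (a * z + b) = a / 2 * z + b'"
    unfolding b'_def WOne by (simp add: add_divide_distrib add.assoc)
  have K: "isCont K z" "K z \<noteq> 0" unfolding K_def by (auto intro!: continuous_intros)
  have "a / 2 \<noteq> 0" using a by simp
  then show ?thesis unfolding f arg by (rule pole_or_nonzero_limit_times_Gamma_affine[OF _ K])
qed

lemma has_pole_at_Lfun_affine_iff:
  fixes a b z :: complex
  assumes "a \<noteq> 0"
  shows "has_pole_at (\<lambda>s. Lfun (a * s + b) rs) z \<longleftrightarrow> (\<exists>r\<in>set rs. Lfac_arg r (a * z + b) \<in> \<int>\<^sub>\<le>\<^sub>0)"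
proof -
  have "has_pole_at (\<lambda>s. Lfac r (a * s + b)) z \<or> nonzero_limit_at (\<lambda>s. Lfac r (a * s + b)) z"
    for r using pole_or_nonzero_limit_Lfac_affine[OF assms] by blast
  then have "has_pole_at (\<lambda>s. \<Prod>r\<leftarrow>rs. Lfac r (a * s + b)) z \<longleftrightarrow>
        (\<exists>r\<in>set rs. has_pole_at (\<lambda>s. Lfac r (a * s + b)) z)"
    using pole_or_nonzero_limit_prod_list[of rs "\<lambda>r s. Lfac r (a * s + b)" z] by blast
  then show ?thesis
    unfolding Lfun_def by (simp add: pole_or_nonzero_limit_Lfac_affine[OF assms, THEN conjunct1])
qed

section \<open>Critical points of a single constituent\<close>

definition critical_for :: "wrep \<Rightarrow> complex \<Rightarrow> bool" where
  "critical_for r z \<longleftrightarrow> Lfac_arg r z \<notin> \<int>\<^sub>\<le>\<^sub>0 \<and> Lfac_arg (wcontra r) (1 - z) \<notin> \<int>\<^sub>\<le>\<^sub>0"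

lemma no_poles_Lfun_iff:
  "\<not> has_pole_at (\<lambda>s. Lfun s rs) z \<and> \<not> has_pole_at (\<lambda>s. Lfun (1 - s) (contra rs)) z \<longleftrightarrow>
   (\<forall>r\<in>set rs. critical_for r z)"
  using has_pole_at_Lfun_affine_iff[of 1 0 rs z] has_pole_at_Lfun_affine_iff[of "-1" 1 "contra rs" z]
  by (auto simp: critical_for_def contra_def)

lemma critical_for_WTwo_of_real:
  "critical_for (WTwo L (of_real c)) (of_real t) \<longleftrightarrow>
   t + c + of_int L / 2 \<notin> \<int>\<^sub>\<le>\<^sub>0 \<and> 1 - (t + c) + of_int L / 2 \<notin> \<int>\<^sub>\<le>\<^sub>0"
proof -
  have "Lfac_arg (WTwo L (of_real c)) (of_real t) = of_real (t + c + of_int L / 2)"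
    "Lfac_arg (wcontra (WTwo L (of_real c))) (1 - of_real t) = of_real (1 - (t + c) + of_int L / 2)"
    by simp_all
  then show ?thesis unfolding critical_for_def by (simp only: of_real_in_nonpos_Ints_iff)
qed

lemma critical_for_WOne_of_real:
  "critical_for (WOne e (of_real c)) (of_real t) \<longleftrightarrow>
   (t + c + of_nat e) / 2 \<notin> \<int>\<^sub>\<le>\<^sub>0 \<and> (1 - (t + c) + of_nat e) / 2 \<notin> \<int>\<^sub>\<le>\<^sub>0"
proof -
  have "Lfac_arg (WOne e (of_real c)) (of_real t) = of_real ((t + c + of_nat e) / 2)"
    "Lfac_arg (wcontra (WOne e (of_real c))) (1 - of_real t) = of_real ((1 - (t + c) + of_nat e) / 2)"
    by simp_all
  then show ?thesis unfolding critical_for_def by (simp only: of_real_in_nonpos_Ints_iff)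
qed

lemma half_of_int_in_nonpos_Ints_iff: "(of_int q / 2 :: real) \<in> \<int>\<^sub>\<le>\<^sub>0 \<longleftrightarrow> q \<le> 0 \<and> even q"
proof
  assume "(of_int q / 2 :: real) \<in> \<int>\<^sub>\<le>\<^sub>0"
  then obtain j where "j \<le> 0" "of_int q / 2 = (of_int j :: real)" by (auto elim!: nonpos_Ints_cases)
  then have "q = 2 * j" by linarith
  then show "q \<le> 0 \<and> even q" using \<open>j \<le> 0\<close> by simp
next
  assume "q \<le> 0 \<and> even q"
  then show "(of_int q / 2 :: real) \<in> \<int>\<^sub>\<le>\<^sub>0" by (auto elim!: evenE intro: nonpos_Ints_of_int)
qed

lemma not_nonpos_Ints_reflection_pair_iff:
  fixes u :: real
  assumes "u + of_int L / 2 = of_int q"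
  shows "u + of_int L / 2 \<notin> \<int>\<^sub>\<le>\<^sub>0 \<and> 1 - u + of_int L / 2 \<notin> \<int>\<^sub>\<le>\<^sub>0 \<longleftrightarrow>
         \<bar>u - 1 / 2\<bar> < of_int L / 2 + 1 / 2"
proof -
  have reflected: "1 - u + of_int L / 2 = of_int (1 - q + L)" using assms by simp
  have "\<bar>u - 1 / 2\<bar> < of_int L / 2 + 1 / 2 \<longleftrightarrow> 0 < real_of_int q \<and> real_of_int q < of_int L + 1"
    using assms by (auto simp: abs_less_iff)
  also have "\<dots> \<longleftrightarrow> 0 < q \<and> q < L + 1" by linarith
  finally show ?thesis unfolding reflected assms of_int_in_nonpos_Ints_iff by auto
qed

lemma critical_for_wtwo_iff:
  assumes "t + c + of_int L / 2 = of_int q" and "0 \<le> L"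
  shows "(\<forall>r\<in>set (wtwo L (of_real c)). critical_for r (of_real t)) \<longleftrightarrow>
         \<bar>t + c - 1 / 2\<bar> < of_int L / 2 + 1 / 2"
proof (cases "L = 0")
  case True
  \<comment> \<open>\<open>\<Gamma>\<^sub>\<real>(s) \<Gamma>\<^sub>\<real>(s + 1)\<close> has a pole at every integer,
    so \<open>t\<close> is never critical when \<open>0\<close> is a gap\<close>
  have halves: "(t + c + 0) / 2 = of_int q / 2" "(t + c + 1) / 2 = of_int (q + 1) / 2"
    "(1 - (t + c) + 0) / 2 = of_int (1 - q) / 2" "(1 - (t + c) + 1) / 2 = of_int (2 - q) / 2"
    using assms True by simp_all
  have "\<not> (critical_for (WOne 0 (of_real c)) (of_real t) \<and> critical_for (WOne 1 (of_real c)) (of_real t))"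
    unfolding critical_for_WOne_of_real of_nat_0 of_nat_1 halves half_of_int_in_nonpos_Ints_iff
    by presburger
  moreover have "\<not> \<bar>t + c - 1 / 2\<bar> < of_int L / 2 + 1 / 2"
  proof
    assume "\<bar>t + c - 1 / 2\<bar> < of_int L / 2 + 1 / 2"
    then have "0 < t + c" "t + c < 1" using True by linarith+
    then have "0 < q" "q < 1" using assms True by simp_all
    then show False by simp
  qed
  ultimately show ?thesis using True by (simp add: wtwo_def)
next
  case False
  have "t + c + of_int L / 2 \<notin> \<int>\<^sub>\<le>\<^sub>0 \<and> 1 - (t + c) + of_int L / 2 \<notin> \<int>\<^sub>\<le>\<^sub>0 \<longleftrightarrow>
        \<bar>t + c - 1 / 2\<bar> < of_int L / 2 + 1 / 2"
    using not_nonpos_Ints_reflection_pair_iff assms(1) by blast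
  then show ?thesis using False by (simp add: wtwo_def critical_for_WTwo_of_real)
qed

lemma critical_for_WOne_iff:
  assumes "t + c = of_int q" and "e \<le> 1"
  shows "critical_for (WOne e (of_real c)) (of_real t) \<longleftrightarrow>
    (\<exists>k::nat. k \<ge> 1 \<and> t + c = 2 * real k - real e) \<or>
    (\<exists>k::nat. k \<ge> 1 \<and> t + c = - (2 * real k - 1 - real e))"
proof -
  have halves: "(t + c + of_nat e) / 2 = of_int (q + int e) / 2"
    "(1 - (t + c) + of_nat e) / 2 = of_int (1 - q + int e) / 2"
    using assms(1) by simp_all
  have "t + c = 2 * real k - real e \<longleftrightarrow> q = 2 * int k - int e"
    "t + c = - (2 * real k - 1 - real e) \<longleftrightarrow> q = - (2 * int k - 1 - int e)" for k
    using assms(1) by linarith+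
  moreover have "\<not> (q + int e \<le> 0 \<and> even (q + int e)) \<and> \<not> (1 - q + int e \<le> 0 \<and> even (1 - q + int e))
     \<longleftrightarrow> (\<exists>k::nat. k \<ge> 1 \<and> q = 2 * int k - int e) \<or> (\<exists>k::nat. k \<ge> 1 \<and> q = - (2 * int k - 1 - int e))"
    using assms(2) by (cases e) (simp; presburger)+
  ultimately show ?thesis
    unfolding critical_for_WOne_of_real halves half_of_int_in_nonpos_Ints_iff by simp
qed

section \<open>Weights in \<open>L\<^sub>0\<^sup>+\<close> and their gaps\<close>

lemma L0plus_reflect: "L0plus N w l \<Longrightarrow> 1 \<le> i \<Longrightarrow> i \<le> N \<Longrightarrow> l (N + 1 - i) = - l i"
  unfolding L0plus_def by force

lemma L0plus_pos:
  assumes "L0plus N w l" and "1 \<le> i" and "i \<le> N div 2"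
  shows "0 < l i"
proof -
  have "l (N + 1 - i) < l i" using assms unfolding L0plus_def by auto
  then show ?thesis using L0plus_reflect[OF assms(1,2)] assms(3) by simp
qed

lemma L0plus_middle:
  assumes "L0plus N w l" and "2 * i = N + 1"
  shows "l i = 0"
proof -
  have "l (N + 1 - i) = - l i" by (rule L0plus_reflect[OF assms(1)]) (use assms(2) in auto)
  moreover have "N + 1 - i = i" using assms(2) by auto
  ultimately show ?thesis by simp
qed

lemma L0plus_parity:
  "L0plus N w l \<Longrightarrow> 1 \<le> i \<Longrightarrow> i \<le> N \<Longrightarrow> 2 dvd (w + l i) - (int N + 1)"
  unfolding L0plus_def by (simp only: mod_eq_dvd_iff[symmetric])

lemma L0plus_abs_eq_half:
  assumes "L0plus N w l" and "1 \<le> i" "i \<le> N" and "2 * i \<noteq> N + 1"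
  shows "\<exists>i'\<in>{1..N div 2}. \<bar>l i\<bar> = l i'"
proof (cases "i \<le> N div 2")
  case True
  then show ?thesis using assms(2) L0plus_pos[OF assms(1,2) True] by (intro bexI[of _ i]) auto
next
  case False
  then have i': "N + 1 - i \<in> {1..N div 2}" using assms by auto
  then have "0 < l (N + 1 - i)" using L0plus_pos[OF assms(1)] by auto
  then show ?thesis using L0plus_reflect[OF assms(1-3)] i' by (intro bexI[of _ "N + 1 - i"]) auto
qed

lemma L0plus_odd_imp_even: assumes "L0plus N w l" and "odd N" shows "even w"
proof -
  have mid: "2 * ((N + 1) div 2) = N + 1" using assms(2) by presburger
  then have "2 dvd (w + l ((N + 1) div 2)) - (int N + 1)"
    using L0plus_parity[OF assms(1)] by simp
  then show ?thesis using L0plus_middle[OF assms(1) mid] assms(2) by simp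
qed

definition weight_gaps :: "nat \<Rightarrow> (nat \<Rightarrow> int) \<Rightarrow> nat \<Rightarrow> (nat \<Rightarrow> int) \<Rightarrow> int set" where
  "weight_gaps n l m l' = {\<bar>l i - l' j\<bar> | i j. i \<in> {1..n} \<and> j \<in> {1..m} \<and> \<not> (2 * i = n + 1 \<and> 2 * j = m + 1)}"

lemma Lnought_eq_Min_weight_gaps: "Lnought n l m l' = Min (weight_gaps n l m l')"
proof -
  have "real i = (real n + 1) / 2 \<longleftrightarrow> real (2 * i) = real (n + 1)" for i n by auto
  then have "real i = (real n + 1) / 2 \<longleftrightarrow> 2 * i = n + 1" for i n by (simp only: of_nat_eq_iff)
  then show ?thesis unfolding Lnought_def weight_gaps_def atLeastAtMost_iff by presburger
qed

lemma finite_weight_gaps: "finite (weight_gaps n l m l')"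
proof (rule finite_subset)
  show "weight_gaps n l m l' \<subseteq> (\<lambda>(i, j). \<bar>l i - l' j\<bar>) ` ({1..n} \<times> {1..m})"
    unfolding weight_gaps_def by force
qed auto

lemma weight_gaps_nonempty:
  assumes "n \<ge> 1" "m \<ge> 1" "\<not> (n = 1 \<and> m = 1)"
  shows "weight_gaps n l m l' \<noteq> {}"
proof -
  have "1 \<in> {1..n}" "1 \<in> {1..m}" "\<not> (2 * 1 = n + 1 \<and> 2 * 1 = m + 1)" using assms by auto
  then show ?thesis unfolding weight_gaps_def by blast
qed

lemma even_weight_gap:
  assumes "L0plus n w l" "L0plus m w' l'" and "L \<in> weight_gaps n l m l'"
  shows "even (int n + int m - w - w' + L)"
proof -
  from assms(3) obtain i j where L: "L = \<bar>l i - l' j\<bar>" and "i \<in> {1..n}" "j \<in> {1..m}"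
    unfolding weight_gaps_def by blast
  then have "2 dvd (w + l i) - (int n + 1)" "2 dvd (w' + l' j) - (int m + 1)"
    using L0plus_parity assms(1,2) by auto
  then have "2 dvd 2 * (l i - 1) - ((w + l i) - (int n + 1)) - ((w' + l' j) - (int m + 1))"
    by (blast intro: dvd_diff dvd_triv_left)
  also have "2 * (l i - 1) - ((w + l i) - (int n + 1)) - ((w' + l' j) - (int m + 1)) =
      int n + int m - w - w' + (l i - l' j)"
    by simp
  finally have "even (int n + int m - w - w' + (l i - l' j))" .
  moreover have "even (\<bar>d\<bar> - d)" for d :: int by (cases "d < 0") auto
  ultimately have "even ((int n + int m - w - w' + (l i - l' j)) + (\<bar>l i - l' j\<bar> - (l i - l' j)))"
    by (rule dvd_add)
  also have "(int n + int m - w - w' + (l i - l' j)) + (\<bar>l i - l' j\<bar> - (l i - l' j)) =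
      int n + int m - w - w' + L"
    unfolding L by simp
  finally show ?thesis .
qed

lemma abs_diff_in_weight_gaps:
  "i \<in> {1..n} \<Longrightarrow> j \<in> {1..m} \<Longrightarrow> \<not> (2 * i = n + 1 \<and> 2 * j = m + 1) \<Longrightarrow>
   \<bar>l i - l' j\<bar> \<in> weight_gaps n l m l'"
  unfolding weight_gaps_def by blast

lemma weight_gaps_commute: "weight_gaps m l' n l = weight_gaps n l m l'"
proof -
  have "weight_gaps m l' n l \<subseteq> weight_gaps n l m l'" for n m :: nat and l l' :: "nat \<Rightarrow> int"
  proof
    fix L assume "L \<in> weight_gaps m l' n l"
    then obtain j i where "L = \<bar>l' j - l i\<bar>" "j \<in> {1..m}" "i \<in> {1..n}"
      "\<not> (2 * j = m + 1 \<and> 2 * i = n + 1)"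
      unfolding weight_gaps_def by blast
    then show "L \<in> weight_gaps n l m l'"
      using abs_diff_in_weight_gaps[of i n j m l l'] by (auto simp: abs_minus_commute)
  qed
  then show ?thesis by blast
qed

lemma weight_gaps_subset_half_range:
  assumes ln: "L0plus n w l" and lm: "L0plus m w' l'"
  shows "weight_gaps n l m l' \<subseteq>
    (\<Union>i\<in>{1..n div 2}. \<Union>j\<in>{1..m div 2}. {l i + l' j, \<bar>l i - l' j\<bar>}) \<union>
    (if odd m then l ` {1..n div 2} else {}) \<union> (if odd n then l' ` {1..m div 2} else {})"
    (is "_ \<subseteq> ?R")
proof
  fix L assume "L \<in> weight_gaps n l m l'"
  then obtain i j where L: "L = \<bar>l i - l' j\<bar>" and i: "i \<in> {1..n}" and j: "j \<in> {1..m}"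
    and not_mid: "\<not> (2 * i = n + 1 \<and> 2 * j = m + 1)"
    unfolding weight_gaps_def by blast
  consider "2 * i = n + 1" | "2 * j = m + 1" | "2 * i \<noteq> n + 1" "2 * j \<noteq> m + 1" by blast
  then show "L \<in> ?R"
  proof cases
    case 1
    then obtain j' where "j' \<in> {1..m div 2}" "\<bar>l' j\<bar> = l' j'"
      using L0plus_abs_eq_half[OF lm, of j] j not_mid by auto
    moreover have "odd n" using 1 by presburger
    ultimately show ?thesis unfolding L using L0plus_middle[OF ln 1] by auto
  next
    case 2
    then obtain i' where "i' \<in> {1..n div 2}" "\<bar>l i\<bar> = l i'"
      using L0plus_abs_eq_half[OF ln, of i] i not_mid by auto
    moreover have "odd m" using 2 by presburger
    ultimately show ?thesis unfolding L using L0plus_middle[OF lm 2] by auto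
  next
    case 3
    then obtain i' j' where i': "i' \<in> {1..n div 2}" "\<bar>l i\<bar> = l i'"
      and j': "j' \<in> {1..m div 2}" "\<bar>l' j\<bar> = l' j'"
      using L0plus_abs_eq_half[OF ln, of i] L0plus_abs_eq_half[OF lm, of j] i j by auto
    have "L = l i' + l' j' \<or> L = \<bar>l i' - l' j'\<bar>" unfolding L using i'(2) j'(2) by linarith
    then show ?thesis using i'(1) j'(1) by blast
  qed
qed

lemma weight_in_weight_gaps:
  assumes ln: "L0plus n w l" and lm: "L0plus m w' l'" and "odd m" and i: "i \<in> {1..n div 2}"
  shows "l i \<in> weight_gaps n l m l'"
proof -
  have mid: "2 * ((m + 1) div 2) = m + 1" using \<open>odd m\<close> by presburger
  have "i \<in> {1..n}" "2 * i \<noteq> n + 1" "(m + 1) div 2 \<in> {1..m}"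
    using i \<open>odd m\<close> by (auto elim!: oddE)
  then have "\<bar>l i - l' ((m + 1) div 2)\<bar> \<in> weight_gaps n l m l'" by (blast intro: abs_diff_in_weight_gaps)
  moreover have "0 < l i" using L0plus_pos[OF ln] i by simp
  ultimately show ?thesis using L0plus_middle[OF lm mid] by simp
qed

lemma weight_sums_in_weight_gaps:
  assumes ln: "L0plus n w l" and lm: "L0plus m w' l'"
    and i: "i \<in> {1..n div 2}" and j: "j \<in> {1..m div 2}"
  shows "l i + l' j \<in> weight_gaps n l m l'" and "\<bar>l i - l' j\<bar> \<in> weight_gaps n l m l'"
proof -
  have "i \<in> {1..n}" "2 * i \<noteq> n + 1" "m + 1 - j \<in> {1..m}" "j \<in> {1..m}" using i j by auto
  then have "\<bar>l i - l' (m + 1 - j)\<bar> \<in> weight_gaps n l m l'" "\<bar>l i - l' j\<bar> \<in> weight_gaps n l m l'"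
    by (blast intro: abs_diff_in_weight_gaps)+
  moreover have "\<bar>l i - l' (m + 1 - j)\<bar> = l i + l' j"
    using L0plus_reflect[OF lm, of j] L0plus_pos[OF ln, of i] L0plus_pos[OF lm, of j] i j by auto
  ultimately show "l i + l' j \<in> weight_gaps n l m l'" "\<bar>l i - l' j\<bar> \<in> weight_gaps n l m l'"
    by simp_all
qed

lemma weight_gaps_eq_half_range:
  assumes ln: "L0plus n w l" and lm: "L0plus m w' l'"
  shows "weight_gaps n l m l' =
    (\<Union>i\<in>{1..n div 2}. \<Union>j\<in>{1..m div 2}. {l i + l' j, \<bar>l i - l' j\<bar>}) \<union>
    (if odd m then l ` {1..n div 2} else {}) \<union> (if odd n then l' ` {1..m div 2} else {})"
proof (rule antisym[OF weight_gaps_subset_half_range[OF ln lm]], intro Un_least UN_least)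
  show "{l i + l' j, \<bar>l i - l' j\<bar>} \<subseteq> weight_gaps n l m l'"
    if "i \<in> {1..n div 2}" "j \<in> {1..m div 2}" for i j
    using weight_sums_in_weight_gaps[OF ln lm that] by simp
  show "(if odd m then l ` {1..n div 2} else {}) \<subseteq> weight_gaps n l m l'"
    using weight_in_weight_gaps[OF ln lm] by (simp add: image_subset_iff)
  show "(if odd n then l' ` {1..m div 2} else {}) \<subseteq> weight_gaps n l m l'"
    using weight_in_weight_gaps[OF lm ln] by (simp add: image_subset_iff weight_gaps_commute[of m l' n l])
qed

section \<open>The constituents of \<open>\<tau>\<close>\<close>

lemma set_piW:
  "set (piW N w l d) = (\<lambda>i. WTwo (l i) (- of_int w / 2)) ` {1..N div 2} \<union>
     (if odd N then {WOne d (- of_int w / 2)} else {})"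
  by (auto simp: piW_def)

lemma set_tauW_eq:
  assumes ln: "L0plus n w l" and lm: "L0plus m w' l'"
  defines "c \<equiv> - of_int w / 2 + - of_int w' / 2 :: complex"
  shows "set (tauW n w l d m w' l' d') =
    (\<Union>L\<in>weight_gaps n l m l'. set (wtwo L c)) \<union>
    (if odd n \<and> odd m then {WOne ((d + d') mod 2) c} else {})"
proof -
  have "set (tauW n w l d m w' l' d') =
      (\<Union>x\<in>set (piW n w l d). \<Union>y\<in>set (piW m w' l' d'). set (wtens x y))"
    by (auto simp: tauW_def tens_def)
  also have "\<dots> =
      (\<Union>i\<in>{1..n div 2}. \<Union>j\<in>{1..m div 2}. set (wtwo (l i + l' j) c) \<union> set (wtwo \<bar>l i - l' j\<bar> c)) \<union>
      (if odd m then (\<Union>i\<in>{1..n div 2}. set (wtwo (l i) c)) else {}) \<union>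
      (if odd n then (\<Union>j\<in>{1..m div 2}. set (wtwo (l' j) c)) else {}) \<union>
      (if odd n \<and> odd m then {WOne ((d + d') mod 2) c} else {})"
  proof -
    have "set (wtwo L c) = {WTwo L c}" if "0 < L" for L using that by (simp add: wtwo_def)
    then show ?thesis
      unfolding set_piW c_def using L0plus_pos[OF ln] L0plus_pos[OF lm]
      by (auto simp: add_pos_pos)
  qed
  also have "\<dots> = (\<Union>L\<in>weight_gaps n l m l'. set (wtwo L c)) \<union>
      (if odd n \<and> odd m then {WOne ((d + d') mod 2) c} else {})"
    unfolding weight_gaps_eq_half_range[OF ln lm] by auto
  finally show ?thesis .
qed

lemma half_integral_shift:
  assumes "t = (real n + real m) / 2 + of_int k" and "even (int n + int m - w - w' + L)"
  shows "t - (real_of_int w + real_of_int w') / 2 + of_int L / 2 =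
         of_int (k + (int n + int m - w - w' + L) div 2)"
proof -
  from assms(2) obtain q where q: "int n + int m - w - w' + L = 2 * q" by blast
  have "t - (real_of_int w + real_of_int w') / 2 + of_int L / 2 =
      of_int (int n + int m - w - w' + L) / 2 + of_int k"
    unfolding assms(1) by (simp add: field_simps)
  then show ?thesis unfolding q by simp
qed

lemma critical_iff_weight_gaps:
  assumes ln: "L0plus n w l" and lm: "L0plus m w' l'" and t: "t = (real n + real m) / 2 + of_int k"
  defines "c \<equiv> - (real_of_int w + real_of_int w') / 2"
  shows "critical n w l \<delta> m w' l' \<delta>' t \<longleftrightarrow>
    (\<forall>L\<in>weight_gaps n l m l'. \<bar>t + c - 1 / 2\<bar> < of_int L / 2 + 1 / 2) \<and>
    (odd n \<and> odd m \<longrightarrow> critical_for (WOne ((\<delta> + \<delta>') mod 2) (of_real c)) (of_real t))"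
proof -
  have "- of_int w / 2 + - of_int w' / 2 = complex_of_real c" unfolding c_def by (simp add: field_simps)
  then have "critical n w l \<delta> m w' l' \<delta>' t \<longleftrightarrow>
      (\<forall>L\<in>weight_gaps n l m l'. \<forall>r\<in>set (wtwo L (of_real c)). critical_for r (of_real t)) \<and>
      (odd n \<and> odd m \<longrightarrow> critical_for (WOne ((\<delta> + \<delta>') mod 2) (of_real c)) (of_real t))"
    unfolding critical_def no_poles_Lfun_iff set_tauW_eq[OF ln lm] using t by auto
  moreover have "(\<forall>r\<in>set (wtwo L (of_real c)). critical_for r (of_real t)) \<longleftrightarrow>
      \<bar>t + c - 1 / 2\<bar> < of_int L / 2 + 1 / 2" if L: "L \<in> weight_gaps n l m l'" for L
  proof (rule critical_for_wtwo_iff)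
    have "t + c = t - (real_of_int w + real_of_int w') / 2" unfolding c_def by linarith
    then show "t + c + of_int L / 2 = of_int (k + (int n + int m - w - w' + L) div 2)"
      using half_integral_shift[OF t even_weight_gap[OF ln lm L]] by simp
    show "0 \<le> L" using L unfolding weight_gaps_def by auto
  qed
  ultimately show ?thesis by simp
qed

lemma critical_for_exceptional_iff:
  assumes "L0plus n w l" "L0plus m w' l'" and t: "t = (real n + real m) / 2 + of_int k"
    and "odd n" "odd m" and "e \<le> 1"
  defines "c \<equiv> - (real_of_int w + real_of_int w') / 2"
  shows "critical_for (WOne e (of_real c)) (of_real t) \<longleftrightarrow>
    (\<exists>k::nat. k \<ge> 1 \<and> t + c = 2 * real k - real e) \<or>
    (\<exists>k::nat. k \<ge> 1 \<and> t + c = - (2 * real k - 1 - real e))"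
proof (rule critical_for_WOne_iff)
  have "even (int n + int m - w - w' + 0)"
    using L0plus_odd_imp_even[OF assms(1,4)] L0plus_odd_imp_even[OF assms(2,5)] assms(4,5) by simp
  from half_integral_shift[OF t this]
  show "t + c = of_int (k + (int n + int m - w - w' + 0) div 2)" unfolding c_def by (simp add: field_simps)
  show "e \<le> 1" by (rule assms(6))
qed

lemma ball_less_mono_Min_iff:
  fixes f :: "'a::linorder \<Rightarrow> 'b::linorder"
  assumes "finite A" "A \<noteq> {}" "mono f"
  shows "(\<forall>a\<in>A. x < f a) \<longleftrightarrow> x < f (Min A)"
  using Min_in[OF assms(1,2)] Min_le[OF assms(1)] monoD[OF assms(3)] order.strict_trans2 by blast

theorem proposition2p1:
  fixes n m :: nat and w w' :: int and l l' :: "nat \<Rightarrow> int" and \<delta> \<delta>' :: nat and t :: real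
  assumes "n \<ge> 1" and "m \<ge> 1" and "\<not> (n = 1 \<and> m = 1)"
    and "L0plus n w l" and "L0plus m w' l'"
    and "\<delta> \<in> {0, 1}" and "\<delta>' \<in> {0, 1}"
    and "\<exists>k::int. t = (real n + real m) / 2 + of_int k"
  shows "critical n w l \<delta> m w' l' \<delta>' t \<longleftrightarrow>
    (let \<kappa> = (real_of_int w + real_of_int w' + 1) / 2;
         \<kappa>' = \<kappa> - 1 / 2;
         L = real_of_int (Lnought n l m l') / 2;
         \<epsilon> = real ((\<delta> + \<delta>') mod 2)
     in \<bar>t - \<kappa>\<bar> < L + 1 / 2 \<and>
        (odd n \<and> odd m \<longrightarrow>
           ((\<exists>k::nat. k \<ge> 1 \<and> t - \<kappa>' = 2 * real k - \<epsilon>) \<or>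
            (\<exists>k::nat. k \<ge> 1 \<and> t - \<kappa>' = - (2 * real k - 1 - \<epsilon>)))))"
proof -
  obtain k :: int where t: "t = (real n + real m) / 2 + of_int k" using assms(8) by blast
  define c where "c = - (real_of_int w + real_of_int w') / 2"
  have kappa: "t - (real_of_int w + real_of_int w' + 1) / 2 = t + c - 1 / 2"
    "t - ((real_of_int w + real_of_int w' + 1) / 2 - 1 / 2) = t + c"
    unfolding c_def by (simp_all add: field_simps)
  have gaps: "finite (weight_gaps n l m l')" "weight_gaps n l m l' \<noteq> {}"
    using finite_weight_gaps weight_gaps_nonempty assms(1-3) by auto
  have WOne: "critical_for (WOne ((\<delta> + \<delta>') mod 2) (of_real c)) (of_real t) \<longleftrightarrow>
      (\<exists>k::nat. k \<ge> 1 \<and> t + c = 2 * real k - real ((\<delta> + \<delta>') mod 2)) \<or>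
      (\<exists>k::nat. k \<ge> 1 \<and> t + c = - (2 * real k - 1 - real ((\<delta> + \<delta>') mod 2)))"
    if "odd n" "odd m"
    using critical_for_exceptional_iff[OF assms(4,5) t that, of "(\<delta> + \<delta>') mod 2", folded c_def]
    by simp
  have mono: "mono (\<lambda>L::int. of_int L / 2 + 1 / 2 :: real)" by (intro monoI) simp
  show ?thesis
    unfolding Let_def kappa Lnought_eq_Min_weight_gaps
      critical_iff_weight_gaps[OF assms(4,5) t, folded c_def] ball_less_mono_Min_iff[OF gaps mono]
    using WOne by blast
qed

end
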